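(* Let $\alpha=\{a_k\}_{k\ge1}$ be a sequence of positive real numbers such that $A^*(m):=\#\{k: a_k\le m\}$ satisfies $A^*(m)=O(m^\nu)$ as $m\to\infty$ for some $\nu>0$. Then $\lim_{N\to\infty}E[U_j^N]=I(\alpha;j)<\infty$ for all $j\ge2$.
   Context: For $N\ge2$, coupon type $k\in\{1,\dots,N\}$ has probability $a_k/\sum_{i=1}^Na_i$; $U_j^N$ is the number of empty album places of the $j$-th collector when the first collector completes her set (each collector passes duplicates to the next one), with $$E[U_j^N]=\sum_{k=1}^N\int_0^\infty a_k e^{-a_k t}\frac{(a_kt)^{j-1}}{(j-1)!}\prod_{i\ne k,\,1\le i\le N}\big(1-e^{-a_i t}\big)\,dt.$$ $x_\alpha:=\inf\{x\in[0,1]:\sum_k x^{a_k}=\infty\}$, $L(x;\alpha;j):=\sum_{k}a_k^j\frac{x^{a_k}}{1-x^{a_k}}$, $F(x;\alpha):=\prod_{k}(1-x^{a_k})$, $I(\alpha;j):=\frac{1}{(j-1)!}\int_0^{x_\alpha}L(x;\alpha;j)F(x;\alpha)|\ln x|^{j-1}\frac{dx}{x}$. *)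

theory Defs
  imports "HOL-Analysis.Analysis" "HOL-Library.Landau_Symbols"
begin

text \<open>Coupon weights are a :: nat => real, used at indices k >= 1.\<close>

text \<open>E[U_j^N], given by the explicit integral formula of the paper.\<close>
definition EU :: "(nat \<Rightarrow> real) \<Rightarrow> nat \<Rightarrow> nat \<Rightarrow> real" where
  "EU a N j = (\<Sum>k=1..N. LINT t:{0..}|lborel.
      a k * exp (- a k * t) * (a k * t) ^ (j - 1) / fact (j - 1) *
      (\<Prod>i\<in>{1..N} - {k}. 1 - exp (- a i * t)))"

definition x_alpha :: "(nat \<Rightarrow> real) \<Rightarrow> real" where
  "x_alpha a = Inf {x \<in> {0..1}. \<not> summable (\<lambda>k. x powr a (Suc k))}"

definition L_fun :: "real \<Rightarrow> (nat \<Rightarrow> real) \<Rightarrow> nat \<Rightarrow> real" where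
  "L_fun x a j = (\<Sum>k. a (Suc k) ^ j * x powr a (Suc k) / (1 - x powr a (Suc k)))"

definition F_fun :: "real \<Rightarrow> (nat \<Rightarrow> real) \<Rightarrow> real" where
  "F_fun x a = (\<Prod>k. 1 - x powr a (Suc k))"

definition I_integrand :: "(nat \<Rightarrow> real) \<Rightarrow> nat \<Rightarrow> real \<Rightarrow> real" where
  "I_integrand a j x = L_fun x a j * F_fun x a * \<bar>ln x\<bar> ^ (j - 1) / x / fact (j - 1)"

definition I_val :: "(nat \<Rightarrow> real) \<Rightarrow> nat \<Rightarrow> real" where
  "I_val a j = (LINT x:{0<..<x_alpha a}|lborel. I_integrand a j x)"

end

theory Submission imports Defs "HOL-Probability.Probability" begin

(* With Erlang densities f(j-1, a_k), E[U_j^N] is the integral over t > 0 of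
   sum_k f(j-1, a_k)(t) * prod_(i ~= k) (1 - e^(-a_i t)).
   The growth condition on A^* makes sum_k a_k^(-Q) finite for an integer Q > nu (sum over dyadic
   shells of the a_k). For N > Q each product still contains the factors 1 - e^(-a_i t) <= c t of
   at least Q indices i <= Q + 1, so all integrands are dominated by c^Q sum_k f(j-1, a_k)(t) t^Q,
   whose integral is a constant times sum_k a_k^(-Q). Pointwise the integrands tend to
   F(e^(-t)) L(e^(-t)) t^(j-1) / (j-1)!, so dominated convergence followed by the substitution
   x = e^(-t) yields I(alpha; j); the same summability shows sum_k x^(a_k) < oo for x < 1,
   i.e. x_alpha = 1. *)

lemma exp_ge_power_div_fact:
  fixes y :: real assumes "0 \<le> y" shows "y ^ n / fact n \<le> exp y"
proof -
  have s: "(\<lambda>i. y ^ i / fact i) sums exp y"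
    using exp_converges[of y] by (simp add: divide_inverse ac_simps)
  have "(\<Sum>i\<in>{n}. y ^ i / fact i) \<le> (\<Sum>i. y ^ i / fact i)"
    by (rule sum_le_suminf) (use s assms in \<open>auto simp: sums_iff\<close>)
  with s show ?thesis by (simp add: sums_iff)
qed

lemma exp_minus_powr: "exp (- t) powr b = exp (- b * t :: real)"
  by (simp add: powr_def)

lemma power_mult_exp_minus_le:
  fixes a t :: real assumes "a > 0" "t > 0"
  shows "a ^ p * exp (- a * t) \<le> fact (p + Q) / t ^ (p + Q) * (1 / a ^ Q)"
proof -
  have "(a * t) ^ (p + Q) / fact (p + Q) \<le> exp (a * t)"
    using assms by (intro exp_ge_power_div_fact) simp
  then have "exp (- a * t) \<le> fact (p + Q) / (a * t) ^ (p + Q)"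
    using assms by (simp add: exp_minus field_simps)
  then have "a ^ p * exp (- a * t) \<le> a ^ p * (fact (p + Q) / (a * t) ^ (p + Q))"
    using assms by (intro mult_left_mono) auto
  also have "\<dots> = fact (p + Q) / t ^ (p + Q) * (1 / a ^ Q)"
    using assms by (simp add: power_mult_distrib power_add field_simps)
  finally show ?thesis .
qed

lemma inverse_one_minus_exp_minus_le:
  fixes y :: real assumes "y > 0" shows "1 / (1 - exp (- y)) \<le> 1 + 1 / y"
proof -
  have "exp (- y) \<le> 1 / (1 + y)"
    using exp_ge_add_one_self[of y] assms by (simp add: exp_minus field_simps)
  then have "y / (1 + y) \<le> 1 - exp (- y)"
    using assms by (simp add: field_simps)
  moreover have "y / (1 + y) > 0" "1 - exp (- y) > 0" using assms by simp_all
  ultimately have "1 / (1 - exp (- y)) \<le> 1 / (y / (1 + y))"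
    by (intro divide_left_mono) auto
  also have "\<dots> = 1 + 1 / y" using assms by (simp add: field_simps)
  finally show ?thesis .
qed

lemma dyadic_floor_log_bounds:
  fixes x R :: real
  assumes "0 < R" "R < x"
  defines "e \<equiv> nat \<lfloor>log 2 (x / R)\<rfloor>"
  shows "R * 2 ^ e \<le> x" "x < R * 2 ^ Suc e"
proof -
  define l where "l = log 2 (x / R)"
  have "x / R > 1" using assms by simp
  then have l: "real e \<le> l" "l < real e + 1" and x: "x / R = 2 powr l"
    by (simp_all add: e_def l_def)
  have "2 ^ e = 2 powr real e" by (simp add: powr_realpow)
  also have "\<dots> \<le> x / R" using l x by simp
  finally have "2 ^ e \<le> x / R" .
  moreover have "x / R < 2 powr (real e + 1)" using l x by simp
  then have "x / R < 2 ^ Suc e" by (simp add: powr_add powr_realpow)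
  ultimately show "R * 2 ^ e \<le> x" "x < R * 2 ^ Suc e"
    using assms by (simp_all add: field_simps)
qed

lemma sum_inverse_power_dyadic_shell_le:
  fixes a :: "nat \<Rightarrow> real" and R C \<nu> :: real and S :: "nat set" and y :: nat
  assumes fin: "\<And>m. finite {k. k \<ge> 1 \<and> a k \<le> m}"
    and cnt: "\<And>m. m \<ge> R \<Longrightarrow> real (card {k. k \<ge> 1 \<and> a k \<le> m}) \<le> C * m powr \<nu>"
    and R: "R > 0" and S: "S \<subseteq> {k. k \<ge> 1 \<and> R < a k}"
  defines "shell \<equiv> {k \<in> S. nat \<lfloor>log 2 (a k / R)\<rfloor> = y}"
  shows "(\<Sum>k\<in>shell. 1 / a k ^ Q) \<le> C * (2 * R) powr \<nu> / R ^ Q * (2 powr \<nu> / 2 ^ Q) ^ y"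
proof -
  have shell_bounds: "R * 2 ^ y \<le> a k" "a k \<le> R * 2 ^ Suc y" if "k \<in> shell" for k
    using that S dyadic_floor_log_bounds[OF R, of "a k"] by (auto simp: shell_def)
  have "(\<Sum>k\<in>shell. 1 / a k ^ Q) \<le> (\<Sum>k\<in>shell. 1 / (R * 2 ^ y) ^ Q)"
    using R shell_bounds(1) by (intro sum_mono frac_le power_mono) auto
  also have "\<dots> \<le> real (card {k. k \<ge> 1 \<and> a k \<le> R * 2 ^ Suc y}) / (R * 2 ^ y) ^ Q"
  proof -
    have "shell \<subseteq> {k. k \<ge> 1 \<and> a k \<le> R * 2 ^ Suc y}"
      using shell_bounds S unfolding shell_def by blast
    then have "card shell \<le> card {k. k \<ge> 1 \<and> a k \<le> R * 2 ^ Suc y}"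
      by (intro card_mono fin)
    then show ?thesis using R by (simp add: divide_right_mono)
  qed
  also have "\<dots> \<le> C * (R * 2 ^ Suc y) powr \<nu> / (R * 2 ^ y) ^ Q"
    using R by (intro divide_right_mono cnt) (simp_all del: power_Suc)
  also have "\<dots> = C * (2 * R) powr \<nu> / R ^ Q * (2 powr \<nu> / 2 ^ Q) ^ y"
    using R by (simp add: powr_mult powr_realpow[symmetric] powr_powr power_mult_distrib
        power_divide field_simps flip: power_mult)
  finally show ?thesis .
qed

(* The shell R 2^y <= a_k < R 2^(y+1) contributes O((2^nu / 2^Q)^y): a geometric series. *)
lemma summable_inverse_power_if_counting_bound:
  fixes a :: "nat \<Rightarrow> real" and R C \<nu> :: real
  assumes pos: "\<And>k. k \<ge> 1 \<Longrightarrow> a k > 0"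
    and fin: "\<And>m. finite {k. k \<ge> 1 \<and> a k \<le> m}"
    and cnt: "\<And>m. m \<ge> R \<Longrightarrow> real (card {k. k \<ge> 1 \<and> a k \<le> m}) \<le> C * m powr \<nu>"
    and R: "R > 0" and C: "C \<ge> 0" and Q: "\<nu> < real Q"
  shows "summable (\<lambda>n. 1 / a (Suc n) ^ Q)"
proof -
  define e where "e k = nat \<lfloor>log 2 (a k / R)\<rfloor>" for k
  define \<rho> :: real where "\<rho> = 2 powr \<nu> / 2 ^ Q"
  define K where "K = C * (2 * R) powr \<nu> / R ^ Q"
  define A where "A = {k. k \<ge> 1 \<and> a k \<le> R}"
  have \<rho>: "0 \<le> \<rho>" "\<rho> < 1"
    using Q by (simp_all add: \<rho>_def powr_realpow[symmetric])
  have K: "K \<ge> 0" using C R by (simp add: K_def)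
  show ?thesis
  proof (rule summableI_nonneg_bounded)
    fix n :: nat
    define T where "T = {1..n}"
    have "(\<Sum>i<n. 1 / a (Suc i) ^ Q) = (\<Sum>k\<in>T. 1 / a k ^ Q)"
      unfolding T_def by (simp add: sum.atLeast1_atMost_eq)
    also have "\<dots> = (\<Sum>k\<in>T \<inter> A. 1 / a k ^ Q) + (\<Sum>k\<in>T - A. 1 / a k ^ Q)"
      by (rule sum.Int_Diff) (simp add: T_def)
    also have "(\<Sum>k\<in>T \<inter> A. 1 / a k ^ Q) \<le> (\<Sum>k\<in>A. 1 / a k ^ Q)"
      using fin pos by (intro sum_mono2) (auto simp: A_def less_imp_le)
    also have "(\<Sum>k\<in>T - A. 1 / a k ^ Q) = (\<Sum>y\<in>e ` (T - A). \<Sum>k\<in>{k \<in> T - A. e k = y}. 1 / a k ^ Q)"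
      by (rule sum.group[symmetric]) (auto simp: T_def)
    also have "\<dots> \<le> (\<Sum>y\<in>e ` (T - A). K * \<rho> ^ y)"
      unfolding e_def K_def \<rho>_def
      by (intro sum_mono sum_inverse_power_dyadic_shell_le[OF fin cnt R]) (auto simp: T_def A_def)
    also have "\<dots> \<le> (\<Sum>y. K * \<rho> ^ y)"
      using \<rho> K by (intro sum_le_suminf summable_mult summable_geometric) (auto simp: T_def)
    finally show "(\<Sum>i<n. 1 / a (Suc i) ^ Q) \<le> (\<Sum>k\<in>A. 1 / a k ^ Q) + (\<Sum>y. K * \<rho> ^ y)"
      by simp
  qed (use pos in \<open>simp add: less_imp_le\<close>)
qed

lemma summable_inverse_power_if_polynomial_growth:
  fixes a :: "nat \<Rightarrow> real"
  assumes pos: "\<And>k. k \<ge> 1 \<Longrightarrow> a k > 0"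
    and fin: "\<And>m. finite {k. k \<ge> 1 \<and> a k \<le> m}"
    and growth: "\<exists>\<nu>>0. (\<lambda>m. real (card {k. k \<ge> 1 \<and> a k \<le> m})) \<in> O[at_top](\<lambda>m. m powr \<nu>)"
  obtains Q where "summable (\<lambda>n. 1 / a (Suc n) ^ Q)"
proof -
  obtain \<nu> C where "C > 0"
    and "eventually (\<lambda>m. norm (real (card {k. k \<ge> 1 \<and> a k \<le> m})) \<le> C * norm (m powr \<nu>)) at_top"
    using growth by (auto elim: landau_o.bigE)
  then obtain m0 where C: "C > 0" and m0: "\<And>m. m \<ge> m0 \<Longrightarrow>
      real (card {k. k \<ge> 1 \<and> a k \<le> m}) \<le> C * norm (m powr \<nu>)"
    by (auto simp: eventually_at_top_linorder)
  have "real (card {k. k \<ge> 1 \<and> a k \<le> m}) \<le> C * m powr \<nu>" if "m \<ge> max m0 1" for m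
    using m0[of m] that by simp
  moreover have "\<nu> < real (nat \<lceil>\<nu>\<rceil> + 1)" by linarith
  ultimately have "summable (\<lambda>n. 1 / a (Suc n) ^ (nat \<lceil>\<nu>\<rceil> + 1))"
    using C by (intro summable_inverse_power_if_counting_bound[OF pos fin, of "max m0 1" C \<nu>]) auto
  then show thesis ..
qed

lemma set_integrable_exp_minus_substitution:
  fixes f :: "real \<Rightarrow> real"
  assumes int: "set_integrable lborel {0<..} (\<lambda>t. exp (- t) * f (exp (- t)))"
  shows "set_integrable lborel {0<..<1} f"
    and "(LINT x:{0<..<1}|lborel. f x) = (LINT t:{0<..}|lborel. exp (- t) * f (exp (- t)))"
proof -
  define \<phi> where "\<phi> = (\<lambda>t. exp (- t) * f (exp (- t)))"
  have "\<phi> absolutely_integrable_on {0<..}"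
    using int unfolding \<phi>_def set_integrable_def
    by (subst integrable_completion) (auto dest: borel_measurable_integrable)
  moreover have "(\<lambda>t. exp (- t)) ` {0<..} = {0<..<1::real}"
  proof (intro equalityI subsetI)
    fix x :: real assume "x \<in> {0<..<1}"
    then have "x = exp (- (- ln x))" "- ln x \<in> {0<..}" by auto
    then show "x \<in> (\<lambda>t. exp (- t)) ` {0<..}" by blast
  qed auto
  moreover have "(\<lambda>t. \<bar>- exp (- t)\<bar> * f (exp (- t))) = \<phi>"
    by (simp add: \<phi>_def)
  moreover have "((\<lambda>t. exp (- t)) has_field_derivative - exp (- x)) (at x within {0<..})" for x :: real
    by (auto intro!: derivative_eq_intros)
  moreover have "inj_on (\<lambda>t::real. exp (- t)) {0<..}"
    by (auto intro: inj_onI)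
  ultimately have abs_int: "f absolutely_integrable_on {0<..<1}"
    and integral_eq: "integral {0<..<1} f = integral {0<..} \<phi>"
    using has_absolute_integral_change_of_variables_1'[of "{0<..}" "\<lambda>t. exp (- t)" "\<lambda>t. - exp (- t)" f
        "integral {0<..} \<phi>"]
    by auto
  define g where "g = (\<lambda>t. indicator {0<..} t *\<^sub>R \<phi> t)"
  have [measurable]: "g \<in> borel_measurable borel"
    using int unfolding set_integrable_def g_def \<phi>_def by (auto dest: borel_measurable_integrable)
  have "(\<lambda>x. indicator {0<..<1} x *\<^sub>R f x) = (\<lambda>x. indicator {0<..<1} x * (g (- ln x) / x))"
    by (auto simp: fun_eq_iff indicator_def g_def \<phi>_def)
  also have "\<dots> \<in> borel_measurable lborel"
    by measurable
  finally have meas: "(\<lambda>x. indicator {0<..<1} x *\<^sub>R f x) \<in> borel_measurable lborel" .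
  show si: "set_integrable lborel {0<..<1} f"
    using abs_int unfolding set_integrable_def by (subst (asm) integrable_completion[OF meas])
  have "(LINT x:{0<..<1}|lborel. f x) = integral {0<..<1} f"
    by (rule set_borel_integral_eq_integral(2)[OF si])
  also have "\<dots> = (LINT t:{0<..}|lborel. \<phi> t)"
    unfolding integral_eq using int unfolding \<phi>_def
    by (rule set_borel_integral_eq_integral(2)[symmetric])
  finally show "(LINT x:{0<..<1}|lborel. f x) = (LINT t:{0<..}|lborel. exp (- t) * f (exp (- t)))"
    by (simp add: \<phi>_def)
qed

lemma has_bochner_integral_erlang_moment:
  fixes l :: real assumes "l > 0"
  shows "has_bochner_integral lborel (\<lambda>t. erlang_density k l t * t ^ i) (fact (k + i) / (fact k * l ^ i))"
proof (rule has_bochner_integral_nn_integral)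
  show "(\<integral>\<^sup>+ t. ennreal (erlang_density k l t * t ^ i) \<partial>lborel) = ennreal (fact (k + i) / (fact k * l ^ i))"
    using assms by (rule nn_integral_erlang_ith_moment)
  show "AE t in lborel. 0 \<le> erlang_density k l t * t ^ i"
    using assms by (auto simp: erlang_density_def)
qed (use assms in auto)

lemma integrable_erlang_density: "l > 0 \<Longrightarrow> integrable lborel (erlang_density k l)"
  using has_bochner_integral_erlang_moment[of l k 0] by (simp add: integrable.intros)

(* For t >= 0, erlang_density (j - 1) (a k) t = a_k e^(-a_k t) (a_k t)^(j-1) / (j-1)!. *)
definition EU_density :: "(nat \<Rightarrow> real) \<Rightarrow> nat \<Rightarrow> nat \<Rightarrow> real \<Rightarrow> real" where
  "EU_density a N j t =
     (\<Sum>k=1..N. erlang_density (j - 1) (a k) t * (\<Prod>i\<in>{1..N} - {k}. 1 - exp (- a i * t)))"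

lemma borel_measurable_EU_density[measurable]: "EU_density a N j \<in> borel_measurable borel"
  unfolding EU_density_def by measurable

locale positive_weights =
  fixes a :: "nat \<Rightarrow> real"
  assumes pos: "\<And>k. k \<ge> 1 \<Longrightarrow> a k > 0"
begin

lemma prod_one_minus_exp_minus_le:
  fixes c t :: real
  assumes c: "\<And>i. i \<in> {1..Suc Q} \<Longrightarrow> a i \<le> c" and t: "t \<ge> 0" and N: "N \<ge> Suc Q"
  shows "(\<Prod>i\<in>{1..N} - {k}. 1 - exp (- a i * t)) \<le> (c * t) ^ Q"
proof -
  define m where "m = min 1 (c * t)"
  define S where "S = {1..Suc Q} - {k}"
  have factor_01: "0 \<le> 1 - exp (- a i * t)" "1 - exp (- a i * t) \<le> 1" if "i \<ge> 1" for i
    using pos[OF that] t by auto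
  have factor_le_m: "1 - exp (- a i * t) \<le> m" if "i \<in> S" for i
  proof -
    have i: "i \<ge> 1" "a i \<le> c" using that c by (auto simp: S_def)
    have "1 - exp (- (a i * t)) \<le> a i * t" using exp_ge_add_one_self[of "- (a i * t)"] by simp
    also have "\<dots> \<le> c * t" using i t by (intro mult_right_mono) auto
    finally show ?thesis using factor_01(2)[OF i(1)] by (simp add: m_def)
  qed
  have m: "0 \<le> m" "m \<le> 1" using c[of 1] pos[of 1] t by (auto simp: m_def)
  have "S \<subseteq> {1..N} - {k}" using N by (auto simp: S_def)
  then have "(\<Prod>i\<in>{1..N} - {k}. 1 - exp (- a i * t)) =
      (\<Prod>i\<in>S. 1 - exp (- a i * t)) * (\<Prod>i\<in>({1..N} - {k}) - S. 1 - exp (- a i * t))"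
    by (subst prod.subset_diff) auto
  also have "\<dots> \<le> (\<Prod>i\<in>S. 1 - exp (- a i * t))"
    using factor_01 by (intro mult_left_le prod_le_1 prod_nonneg) (auto simp: S_def)
  also have "\<dots> \<le> m ^ card S"
    using factor_01 factor_le_m by (subst prod_constant[symmetric], intro prod_mono) (auto simp: S_def)
  also have "\<dots> \<le> m ^ Q"
    using m by (intro power_decreasing) (auto simp: S_def card_Diff_singleton_if)
  also have "\<dots> \<le> (c * t) ^ Q"
    using m by (intro power_mono) (auto simp: m_def)
  finally show ?thesis .
qed

lemma EU_density_nonneg: "EU_density a N j t \<ge> 0"
proof (cases "t < 0")
  case False
  then show ?thesis
    unfolding EU_density_def using pos
    by (intro sum_nonneg mult_nonneg_nonneg prod_nonneg erlang_density_nonneg) (auto simp: less_imp_le)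
qed (simp add: EU_density_def erlang_density_def)

lemma EU_eq_integral_EU_density: "EU a N j = integral\<^sup>L lborel (EU_density a N j)"
proof -
  define h where "h k t = erlang_density (j - 1) (a k) t * (\<Prod>i\<in>{1..N} - {k}. 1 - exp (- a i * t))"
    for k t
  have "integrable lborel (h k)" if k: "k \<in> {1..N}" for k
  proof (rule Bochner_Integration.integrable_bound)
    show "integrable lborel (erlang_density (j - 1) (a k))"
      using pos k by (intro integrable_erlang_density) auto
    have "\<bar>h k t\<bar> \<le> erlang_density (j - 1) (a k) t" for t
    proof (cases "t < 0")
      case False
      then have "0 \<le> (\<Prod>i\<in>{1..N} - {k}. 1 - exp (- a i * t))" "(\<Prod>i\<in>{1..N} - {k}. 1 - exp (- a i * t)) \<le> 1"
        using pos by (auto intro!: prod_nonneg prod_le_1 simp: less_imp_le)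
      moreover have "0 \<le> erlang_density (j - 1) (a k) t" using pos k by (simp add: less_imp_le)
      ultimately show ?thesis by (simp add: h_def abs_mult mult_left_le)
    qed (simp add: h_def erlang_density_def)
    then show "AE t in lborel. norm (h k t) \<le> norm (erlang_density (j - 1) (a k) t)"
      by (intro AE_I2) (simp add: order_trans[OF _ abs_ge_self])
  qed (simp add: h_def[abs_def])
  moreover have "(LINT t:{0..}|lborel. a k * exp (- a k * t) * (a k * t) ^ (j - 1) / fact (j - 1) *
      (\<Prod>i\<in>{1..N} - {k}. 1 - exp (- a i * t))) = integral\<^sup>L lborel (h k)" for k
    unfolding set_lebesgue_integral_def h_def erlang_density_def
    by (intro Bochner_Integration.integral_cong) (auto simp: power_mult_distrib mult_ac)
  ultimately show ?thesis
    unfolding EU_def EU_density_def h_def[symmetric]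
    by (simp add: Bochner_Integration.integral_sum[symmetric])
qed

lemma EU_density_eq_prod_mult_sum:
  assumes t: "t > 0" and j: "j \<ge> 1"
  shows "EU_density a N j t = (\<Prod>n<N. 1 - exp (- t) powr a (Suc n)) *
    (t ^ (j - 1) / fact (j - 1) *
     (\<Sum>n<N. a (Suc n) ^ j * exp (- t) powr a (Suc n) / (1 - exp (- t) powr a (Suc n))))"
proof -
  define p where "p i = 1 - exp (- a i * t)" for i
  have p_pos: "p i > 0" if "i \<ge> 1" for i
    using pos[OF that] t by (simp add: p_def)
  have "erlang_density (j - 1) (a k) t * (\<Prod>i\<in>{1..N} - {k}. p i) =
      (\<Prod>i\<in>{1..N}. p i) * (t ^ (j - 1) / fact (j - 1) * (a k ^ j * exp (- a k * t) / p k))"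
    if k: "k \<in> {1..N}" for k
  proof -
    have "(\<Prod>i\<in>{1..N}. p i) = p k * (\<Prod>i\<in>{1..N} - {k}. p i)"
      using k by (intro prod.remove) auto
    moreover have "a k ^ j = a k ^ Suc (j - 1)" using j by simp
    ultimately show ?thesis
      using p_pos[of k] k t by (simp add: erlang_density_def field_simps)
  qed
  then have "EU_density a N j t = (\<Prod>i\<in>{1..N}. p i) *
      (t ^ (j - 1) / fact (j - 1) * (\<Sum>k=1..N. a k ^ j * exp (- a k * t) / p k))"
    by (simp add: EU_density_def p_def sum_distrib_left)
  then show ?thesis
    by (simp add: prod.atLeast1_atMost_eq sum.atLeast1_atMost_eq p_def exp_minus_powr)
qed

end

locale coupon_weights = positive_weights +
  fixes Q :: nat
  assumes summable_inverse_power: "summable (\<lambda>n. 1 / a (Suc n) ^ Q)"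
begin

lemma exponent_pos: "Q > 0"
  using summable_inverse_power by (cases Q) (simp_all add: summable_const_iff)

lemma summable_power_mult_exp:
  assumes "t > 0"
  shows "summable (\<lambda>n. a (Suc n) ^ p * exp (- a (Suc n) * t))"
proof (rule summable_comparison_test')
  show "summable (\<lambda>n. fact (p + Q) / t ^ (p + Q) * (1 / a (Suc n) ^ Q))"
    by (intro summable_mult summable_inverse_power)
  show "norm (a (Suc n) ^ p * exp (- a (Suc n) * t)) \<le> fact (p + Q) / t ^ (p + Q) * (1 / a (Suc n) ^ Q)"
    for n
    using pos[of "Suc n"] assms power_mult_exp_minus_le[of "a (Suc n)" t p Q] by simp
qed

lemma summable_L_fun_terms:
  assumes t: "t > 0" and j: "j \<ge> 1"
  shows "summable (\<lambda>n. a (Suc n) ^ j * exp (- t) powr a (Suc n) / (1 - exp (- t) powr a (Suc n)))"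
proof (rule summable_comparison_test')
  show "summable (\<lambda>n. a (Suc n) ^ j * exp (- a (Suc n) * t) +
      a (Suc n) ^ (j - 1) * exp (- a (Suc n) * t) / t)"
    using t by (intro summable_add summable_divide summable_power_mult_exp)
  fix n :: nat
  define b where "b = a (Suc n)"
  have b: "b > 0" using pos[of "Suc n"] by (simp add: b_def)
  have "norm (a (Suc n) ^ j * exp (- t) powr a (Suc n) / (1 - exp (- t) powr a (Suc n)))
      = b ^ j * exp (- b * t) * (1 / (1 - exp (- (b * t))))"
    using b t by (simp add: exp_minus_powr b_def)
  also have "\<dots> \<le> b ^ j * exp (- b * t) * (1 + 1 / (b * t))"
    using b t by (intro mult_left_mono inverse_one_minus_exp_minus_le) auto
  also have "\<dots> = b ^ j * exp (- b * t) + b ^ (j - 1) * exp (- b * t) / t"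
  proof -
    have "b ^ j = b * b ^ (j - 1)" using j by (simp add: power_eq_if)
    then show ?thesis using b t by (simp add: field_simps)
  qed
  finally show "norm (a (Suc n) ^ j * exp (- t) powr a (Suc n) / (1 - exp (- t) powr a (Suc n)))
      \<le> a (Suc n) ^ j * exp (- a (Suc n) * t) + a (Suc n) ^ (j - 1) * exp (- a (Suc n) * t) / t"
    by (simp add: b_def)
qed

lemma tendsto_prod_F_fun:
  assumes "t > 0"
  shows "(\<lambda>N. \<Prod>n<N. 1 - exp (- t) powr a (Suc n)) \<longlonglongrightarrow> F_fun (exp (- t)) a"
proof -
  have "summable (\<lambda>n. norm ((1 - exp (- t) powr a (Suc n)) - 1))"
    using summable_power_mult_exp[OF assms, of 0] by (simp add: exp_minus_powr)
  then have "convergent_prod (\<lambda>n. 1 - exp (- t) powr a (Suc n))"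
    by (intro abs_convergent_prod_imp_convergent_prod summable_imp_abs_convergent_prod)
  then have "(\<lambda>N. \<Prod>n<Suc N. 1 - exp (- t) powr a (Suc n)) \<longlonglongrightarrow> F_fun (exp (- t)) a"
    unfolding F_fun_def lessThan_Suc_atMost by (rule convergent_prod_LIMSEQ)
  then show ?thesis by (rule filterlim_sequentially_Suc[THEN iffD1])
qed

lemma x_alpha_eq_1: "x_alpha a = 1"
proof -
  have "summable (\<lambda>k. x powr a (Suc k))" if "0 < x" "x < 1" for x :: real
  proof -
    have "- ln x > 0" using that by simp
    from summable_power_mult_exp[OF this, of 0] show ?thesis
      using that by (simp add: powr_def)
  qed
  then have "{x \<in> {0..1}. \<not> summable (\<lambda>k. x powr a (Suc k))} = {1}"
    by (auto simp: summable_const_iff less_eq_real_def)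
  then show ?thesis by (simp add: x_alpha_def)
qed

lemma summable_erlang_moments: "summable (\<lambda>n. erlang_density J (a (Suc n)) t * t ^ Q)"
proof (cases "t > 0")
  case True
  have eq: "erlang_density J (a (Suc n)) t * t ^ Q =
      t ^ (J + Q) / fact J * (a (Suc n) ^ Suc J * exp (- a (Suc n) * t))" for n
    using True by (simp add: erlang_density_def power_add)
  show ?thesis
    unfolding eq using True by (intro summable_mult summable_power_mult_exp)
next
  case False
  then have "(\<lambda>n. erlang_density J (a (Suc n)) t * t ^ Q) = (\<lambda>_. 0)"
    using exponent_pos by (cases "t = 0") (auto simp: erlang_density_def)
  then show ?thesis by simp
qed

lemma integrable_erlang_moment_series:
  "integrable lborel (\<lambda>t. \<Sum>n. erlang_density J (a (Suc n)) t * t ^ Q)"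
proof (rule integrable_suminf)
  have moment: "has_bochner_integral lborel (\<lambda>t. erlang_density J (a (Suc n)) t * t ^ Q)
      (fact (J + Q) / fact J * (1 / a (Suc n) ^ Q))" for n
    using has_bochner_integral_erlang_moment[of "a (Suc n)" J Q] pos[of "Suc n"] by simp
  have nonneg: "0 \<le> erlang_density J (a (Suc n)) t * t ^ Q" for n t
    using pos[of "Suc n"] by (simp add: erlang_density_def)
  show "integrable lborel (\<lambda>t. erlang_density J (a (Suc n)) t * t ^ Q)" for n
    by (rule integrable.intros[OF moment])
  show "AE t in lborel. summable (\<lambda>n. norm (erlang_density J (a (Suc n)) t * t ^ Q))"
    using nonneg summable_erlang_moments by simp
  have "(LINT t|lborel. norm (erlang_density J (a (Suc n)) t * t ^ Q)) =
      fact (J + Q) / fact J * (1 / a (Suc n) ^ Q)" for n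
    using nonneg has_bochner_integral_integral_eq[OF moment] by simp
  then show "summable (\<lambda>n. LINT t|lborel. norm (erlang_density J (a (Suc n)) t * t ^ Q))"
    by (simp only:) (rule summable_mult[OF summable_inverse_power])
qed

lemma EU_density_le:
  assumes "N \<ge> Suc Q"
  shows "EU_density a N j t \<le>
    (\<Sum>i=1..Suc Q. a i) ^ Q * (\<Sum>n. erlang_density (j - 1) (a (Suc n)) t * t ^ Q)"
proof (cases "t < 0")
  case True
  then show ?thesis by (simp add: EU_density_def erlang_density_def)
next
  case False
  define c where "c = (\<Sum>i=1..Suc Q. a i)"
  have c0: "0 \<le> c"
    unfolding c_def using pos by (intro sum_nonneg) (simp add: less_imp_le)
  have "a i \<le> c" if "i \<in> {1..Suc Q}" for i
    unfolding c_def using that pos by (intro member_le_sum) (auto simp: less_imp_le)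
  then have "(\<Prod>i\<in>{1..N} - {k}. 1 - exp (- a i * t)) \<le> (c * t) ^ Q" for k
    using False assms by (intro prod_one_minus_exp_minus_le) auto
  then have "EU_density a N j t \<le> (\<Sum>k=1..N. erlang_density (j - 1) (a k) t * (c * t) ^ Q)"
    unfolding EU_density_def using pos by (intro sum_mono mult_left_mono) (auto simp: less_imp_le)
  also have "\<dots> = c ^ Q * (\<Sum>n<N. erlang_density (j - 1) (a (Suc n)) t * t ^ Q)"
    by (simp add: sum.atLeast1_atMost_eq sum_distrib_left power_mult_distrib mult_ac)
  also have "\<dots> \<le> c ^ Q * (\<Sum>n. erlang_density (j - 1) (a (Suc n)) t * t ^ Q)"
    using pos c0 False by (intro mult_left_mono sum_le_suminf summable_erlang_moments zero_le_power)
      (auto simp: less_imp_le)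
  finally show ?thesis by (simp add: c_def)
qed

lemma tendsto_EU_density:
  assumes j: "j \<ge> 2"
  shows "(\<lambda>N. EU_density a N j t) \<longlonglongrightarrow> indicator {0<..} t * (exp (- t) * I_integrand a j (exp (- t)))"
proof (cases "t > 0")
  case True
  have j1: "j \<ge> 1" using j by simp
  have lim_L: "(\<lambda>N. \<Sum>n<N. a (Suc n) ^ j * exp (- t) powr a (Suc n) / (1 - exp (- t) powr a (Suc n)))
      \<longlonglongrightarrow> L_fun (exp (- t)) a j"
    unfolding L_fun_def by (rule summable_LIMSEQ[OF summable_L_fun_terms[OF True j1]])
  have "(\<lambda>N. EU_density a N j t)
      \<longlonglongrightarrow> F_fun (exp (- t)) a * (t ^ (j - 1) / fact (j - 1) * L_fun (exp (- t)) a j)"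
    unfolding EU_density_eq_prod_mult_sum[OF True j1]
    by (rule tendsto_mult[OF tendsto_prod_F_fun[OF True] tendsto_mult[OF tendsto_const lim_L]])
  moreover have "indicator {0<..} t * (exp (- t) * I_integrand a j (exp (- t))) =
      F_fun (exp (- t)) a * (t ^ (j - 1) / fact (j - 1) * L_fun (exp (- t)) a j)"
    using True by (simp add: I_integrand_def)
  ultimately show ?thesis
    by (simp only:)
next
  case False
  have "j - 1 > 0" using j by simp
  then have "erlang_density (j - 1) l t = 0" for l
    using False by (cases "t = 0") (simp_all add: erlang_density_def)
  then show ?thesis using False by (simp add: EU_density_def)
qed

lemma
  assumes j: "j \<ge> 2"
  shows set_integrable_limit_density:
      "set_integrable lborel {0<..} (\<lambda>t. exp (- t) * I_integrand a j (exp (- t)))"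
    and tendsto_EU_integral_limit_density:
      "(\<lambda>N. EU a N j) \<longlonglongrightarrow> (LINT t:{0<..}|lborel. exp (- t) * I_integrand a j (exp (- t)))"
proof -
  define w where "w t = (\<Sum>i=1..Suc Q. a i) ^ Q * (\<Sum>n. erlang_density (j - 1) (a (Suc n)) t * t ^ Q)"
    for t
  define g where "g = (\<lambda>t. indicator {0<..} t * (exp (- t) * I_integrand a j (exp (- t))))"
  have w: "integrable lborel w"
    unfolding w_def by (intro integrable_mult_right integrable_erlang_moment_series)
  have lim: "AE t in lborel. (\<lambda>N. EU_density a (N + Suc Q) j t) \<longlonglongrightarrow> g t"
    unfolding g_def using tendsto_EU_density[OF j] by (intro AE_I2 LIMSEQ_ignore_initial_segment)
  have bound: "AE t in lborel. norm (EU_density a (N + Suc Q) j t) \<le> w t" for N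
    using EU_density_nonneg EU_density_le unfolding w_def by (intro AE_I2) simp
  have g_meas: "g \<in> borel_measurable lborel"
    unfolding g_def by (rule borel_measurable_LIMSEQ_real[OF tendsto_EU_density[OF j]]) simp
  have "integrable lborel g"
    by (rule integrable_dominated_convergence[OF g_meas _ w lim bound]) simp
  then show "set_integrable lborel {0<..} (\<lambda>t. exp (- t) * I_integrand a j (exp (- t)))"
    by (simp add: set_integrable_def g_def)
  have "(\<lambda>N. EU a (N + Suc Q) j) \<longlonglongrightarrow> integral\<^sup>L lborel g"
    unfolding EU_eq_integral_EU_density
    by (rule integral_dominated_convergence[OF g_meas _ w lim bound]) simp
  then have "(\<lambda>N. EU a N j) \<longlonglongrightarrow> integral\<^sup>L lborel g"
    by (rule LIMSEQ_offset)
  then show "(\<lambda>N. EU a N j) \<longlonglongrightarrow> (LINT t:{0<..}|lborel. exp (- t) * I_integrand a j (exp (- t)))"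
    by (simp add: set_lebesgue_integral_def g_def)
qed

end

theorem mainTheorem11:
  fixes a :: "nat \<Rightarrow> real" and j :: nat
  assumes pos: "\<And>k. k \<ge> 1 \<Longrightarrow> a k > 0"
    and fin: "\<And>m::real. finite {k. k \<ge> 1 \<and> a k \<le> m}"
    and growth: "\<exists>\<nu>>0. (\<lambda>m::real. real (card {k. k \<ge> 1 \<and> a k \<le> m})) \<in> O[at_top](\<lambda>m. m powr \<nu>)"
    and j: "j \<ge> 2"
  shows "set_integrable lborel {0<..<x_alpha a} (I_integrand a j)
     \<and> (\<lambda>N. EU a N j) \<longlonglongrightarrow> I_val a j"
proof -
  obtain Q where "summable (\<lambda>n. 1 / a (Suc n) ^ Q)"
    using summable_inverse_power_if_polynomial_growth[OF pos fin growth] .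
  then interpret coupon_weights a Q
    using pos by unfold_locales auto
  have "x_alpha a = 1" by (rule x_alpha_eq_1)
  with set_integrable_exp_minus_substitution[OF set_integrable_limit_density[OF j]]
    tendsto_EU_integral_limit_density[OF j]
  show ?thesis by (simp add: I_val_def)
qed

end
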